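(* Let $E$ be a complex vector space of dimension $2$, let $f,g$ be linear endomorphisms of $E$, and let $\mathcal{U}=\{u\in\mathbb{C}\setminus\{0\} : e^u=1+u\}$. Then the following are equivalent: (i) $f\circ g\neq g\circ f$ and for every $t\in\mathbb{C}$, $\exp(tf+g)=\exp(tf)\circ\exp(g)$; (ii) there exist $\sigma,\tau\in\mathbb{C}$ such that $\tilde f=f-\sigma\,\mathrm{id}$ and $\tilde g=g-\tau\,\mathrm{id}$ satisfy $\tilde f\neq 0$, $\tilde f^2=0$, $\tilde f\circ\tilde g=0$ and $\mathrm{tr}(\tilde g)\in\mathcal{U}$.
   Context: $\mathrm{id}$ is the identity of $E$, $\mathrm{tr}$ the trace, and $\exp(u)=\sum_{k\ge0}u^k/k!$ for a linear endomorphism $u$. *)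

theory Defs
  imports "HOL-Analysis.Analysis"
begin

text \<open>Endomorphisms of the 2-dimensional complex space E = complex^2 are represented
  by their matrices in complex^2^2; composition is the matrix product (**).\<close>

primrec mpow :: "complex^'n^'n \<Rightarrow> nat \<Rightarrow> complex^'n^'n" where
  "mpow A 0 = mat 1"
| "mpow A (Suc k) = A ** mpow A k"

definition cscale :: "complex \<Rightarrow> complex^'n^'n \<Rightarrow> complex^'n^'n" where
  "cscale c A = (\<chi> i j. c * A $ i $ j)"

definition mexp :: "complex^'n^'n \<Rightarrow> complex^'n^'n" where
  "mexp A = (\<Sum>k. (1 / fact k) *\<^sub>R mpow A k)"

definition U_set :: "complex set" where
  "U_set = {u. u \<noteq> 0 \<and> exp u = 1 + u}"

end

theory Submission
  imports Defs
begin

(*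
  By Cayley-Hamilton, a 2x2 matrix X with eigenvalues l, m satisfies exp X = a I + b X, where b is
  the divided difference of exp at l and m.  Suppose exp (t f + g) = exp (t f) exp g for all t and
  put D = [f, g].  If D is invertible, pairing this identity with D under the trace forces exp g to
  be scalar.  Since 16 det D is minus the discriminant of the quadratic t \<mapsto> disc (t f + g), some
  t f + g has a double eigenvalue l; its exponential has coefficient exp l \<noteq> 0 in front of
  t f + g, so g is a polynomial in f and commutes with it.  Hence D is nilpotent, and after
  conjugating D to E12 both f and g are upper triangular.  The (1,2) entry of the identity is then
  a functional equation for exprel z = (exp z - 1) / z which holds exactly when f has a double
  eigenvalue \<sigma> and the eigenvalue gap u of g satisfies exprel u = 1, i.e. u \<in> U.  The converse is
  the same computation.
*)

section \<open>Matrix algebra\<close>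

definition mat2 :: "'a \<Rightarrow> 'a \<Rightarrow> 'a \<Rightarrow> 'a \<Rightarrow> 'a^2^2" where
  "mat2 a b c d = (\<chi> i j. if i = 1 then (if j = 1 then a else b) else (if j = 1 then c else d))"

lemma mat2_nth [simp]:
  "mat2 a b c d $ 1 $ 1 = a" "mat2 a b c d $ 1 $ 2 = b"
  "mat2 a b c d $ 2 $ 1 = c" "mat2 a b c d $ 2 $ 2 = d"
  by (simp_all add: mat2_def)

lemma mat2_cases:
  obtains a b c d where "A = mat2 a b c d"
proof
  show "A = mat2 (A $ 1 $ 1) (A $ 1 $ 2) (A $ 2 $ 1) (A $ 2 $ 2)"
    by (simp add: vec_eq_iff forall_2)
qed

lemma mat2_eq_iff [simp]:
  "mat2 a b c d = mat2 a' b' c' d' \<longleftrightarrow> a = a' \<and> b = b' \<and> c = c' \<and> d = d'"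
  by (simp add: vec_eq_iff forall_2)

lemma mat_eq_mat2: "mat k = mat2 k 0 0 k"
  by (simp add: vec_eq_iff forall_2 mat_def)

lemma zero_eq_mat2: "0 = mat2 0 0 0 0"
  by (simp add: vec_eq_iff forall_2)

lemma mat2_mult [simp]:
  fixes a b c d :: "'a::semiring_1"
  shows "mat2 a b c d ** mat2 a' b' c' d'
    = mat2 (a * a' + b * c') (a * b' + b * d') (c * a' + d * c') (c * b' + d * d')"
  by (simp add: vec_eq_iff forall_2 matrix_matrix_mult_def sum_2)

lemma mat2_add [simp]: "mat2 a b c d + mat2 a' b' c' d' = mat2 (a + a') (b + b') (c + c') (d + d')"
  by (simp add: vec_eq_iff forall_2)

lemma mat2_diff [simp]: "mat2 a b c d - mat2 a' b' c' d' = mat2 (a - a') (b - b') (c - c') (d - d')"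
  by (simp add: vec_eq_iff forall_2)

lemma cscale_mat2 [simp]: "cscale k (mat2 a b c d) = mat2 (k * a) (k * b) (k * c) (k * d)"
  by (simp add: vec_eq_iff forall_2 cscale_def)

lemma trace_mat2 [simp]: "trace (mat2 a b c d) = a + d"
  by (simp add: trace_def sum_2)

lemma det_mat2 [simp]: "det (mat2 a b c d) = a * d - b * c"
  by (simp add: det_2)

lemma mat_mult_eq_cscale [simp]: "mat c ** A = cscale c A"
  by (simp add: vec_eq_iff cscale_def mat_def matrix_matrix_mult_def if_distrib if_distribR
      cong: if_cong)

lemma mult_mat_eq_cscale [simp]: "A ** mat c = cscale c A"
  by (simp add: vec_eq_iff cscale_def mat_def matrix_matrix_mult_def if_distrib if_distribR
      mult.commute cong: if_cong)

lemma mult_cscale_left [simp]: "cscale c A ** B = cscale c (A ** B)"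
  by (metis mat_mult_eq_cscale matrix_mul_assoc)

lemma mult_cscale_right [simp]: "A ** cscale c B = cscale c (A ** B)"
  by (metis mult_mat_eq_cscale matrix_mul_assoc)

lemma matrix_add_rdistrib: "(A + B) ** C = A ** C + B ** (C :: 'a::semiring_1^'n^'n)"
  by (simp add: vec_eq_iff matrix_matrix_mult_def distrib_right sum.distrib)

lemma matrix_diff_ldistrib: "A ** (B - C) = A ** B - A ** (C :: 'a::ring_1^'n^'n)"
  by (simp add: vec_eq_iff matrix_matrix_mult_def right_diff_distrib sum_subtractf)

lemma matrix_diff_rdistrib: "(A - B) ** C = A ** C - B ** (C :: 'a::ring_1^'n^'n)"
  by (simp add: vec_eq_iff matrix_matrix_mult_def left_diff_distrib sum_subtractf)

lemma cscale_add [simp]: "cscale c (A + B) = cscale c A + cscale c B"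
  by (simp add: vec_eq_iff cscale_def distrib_left)

lemma cscale_diff [simp]: "cscale c (A - B) = cscale c A - cscale c B"
  by (simp add: vec_eq_iff cscale_def right_diff_distrib)

lemma cscale_cscale [simp]: "cscale c (cscale d A) = cscale (c * d) A"
  by (simp add: vec_eq_iff cscale_def)

lemma cscale_mat [simp]: "cscale c (mat d) = mat (c * d)"
  by (simp add: vec_eq_iff cscale_def mat_def)

lemma cscale_1 [simp]: "cscale 1 A = A"
  by (simp add: vec_eq_iff cscale_def)

lemma cscale_0_left [simp]: "cscale 0 A = 0"
  by (simp add: vec_eq_iff cscale_def)

lemma cscale_0_right [simp]: "cscale c 0 = 0"
  by (simp add: vec_eq_iff cscale_def)

lemma cscale_eq_0_iff: "cscale c A = 0 \<longleftrightarrow> c = 0 \<or> A = 0"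
  by (auto simp: vec_eq_iff cscale_def)

lemma trace_cscale [simp]: "trace (cscale c A) = c * trace A"
  by (simp add: trace_def cscale_def sum_distrib_left)

lemma det_cscale2: "det (cscale c (A :: complex^2^2)) = c\<^sup>2 * det A"
  by (cases A rule: mat2_cases) (simp add: power2_eq_square algebra_simps)

lemma cayley_hamilton2: "X ** X = cscale (trace X) X - mat (det (X :: complex^2^2))"
  by (cases X rule: mat2_cases) (simp add: mat_eq_mat2 algebra_simps)

definition commutator :: "'a::ring_1^'n^'n \<Rightarrow> 'a^'n^'n \<Rightarrow> 'a^'n^'n" where
  "commutator f g = f ** g - g ** f"

lemma commutator_add_right:
  "commutator f (A + B) = commutator f A + commutator f (B :: 'a::ring_1^'n^'n)"
  by (simp add: commutator_def matrix_add_ldistrib matrix_add_rdistrib)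

lemma commutator_cscale_right [simp]: "commutator f (cscale c A) = cscale c (commutator f A)"
  by (simp add: commutator_def)

lemma commutator_mat_right [simp]: "commutator f (mat c :: complex^'n^'n) = 0"
  by (simp add: commutator_def)

lemma commutator_self [simp]: "commutator f f = 0"
  by (simp add: commutator_def)

lemma trace_commutator: "trace (commutator f (g :: 'a::comm_ring_1^'n^'n)) = 0"
  by (simp add: commutator_def trace_sub trace_mul_sym[of f g])

lemma trace_span_mult_commutator:
  "trace ((mat a + cscale b f + cscale c g) ** commutator f g) = 0"
proof -
  have "trace (f ** commutator f g) = 0" "trace (g ** commutator f g) = 0"
    by (simp_all add: commutator_def matrix_diff_ldistrib trace_sub matrix_mul_assoc
        trace_mul_sym[of "f ** g" f] trace_mul_sym[of "g ** f" g])
  then show ?thesis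
    by (simp add: matrix_add_rdistrib trace_add trace_commutator)
qed

lemma trace_product_mult_commutator:
  fixes f g :: "complex^2^2"
  shows "trace ((mat a + cscale b f) ** (mat c + cscale d g) ** commutator f g)
    = - b * d * det (commutator f g)"
  by (cases f rule: mat2_cases, cases g rule: mat2_cases)
    (simp add: mat_eq_mat2 commutator_def algebra_simps)

definition discr :: "'a::comm_ring_1^2^2 \<Rightarrow> 'a" where
  "discr X = (trace X)\<^sup>2 - 4 * det X"

lemma discr_pencil:
  fixes f g :: "complex^2^2"
  shows "discr (cscale t f + g)
    = t\<^sup>2 * discr f + t * (discr (f + g) - discr f - discr g) + discr g"
  by (cases f rule: mat2_cases, cases g rule: mat2_cases)
    (simp add: discr_def power2_eq_square algebra_simps)

lemma det_commutator_discr: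
  fixes f g :: "complex^2^2"
  shows "16 * det (commutator f g)
    = 4 * discr f * discr g - (discr (f + g) - discr f - discr g)\<^sup>2"
  by (cases f rule: mat2_cases, cases g rule: mat2_cases)
    (simp add: discr_def commutator_def power2_eq_square algebra_simps)

lemma quadratic_has_root:
  fixes a b c :: complex
  assumes "a \<noteq> 0 \<or> b \<noteq> 0"
  shows "\<exists>t. a * t\<^sup>2 + b * t + c = 0"
proof (cases "a = 0")
  case True
  with assms show ?thesis
    by (intro exI[of _ "- c / b"]) simp
next
  case False
  define r where "r = csqrt (b\<^sup>2 - 4 * a * c)"
  have "a * ((r - b) / (2 * a))\<^sup>2 + b * ((r - b) / (2 * a)) + c
      = (r\<^sup>2 - b\<^sup>2 + 4 * a * c) / (4 * a)"
    using False by (simp add: field_simps power2_eq_square)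
  also have "\<dots> = 0"
    by (simp add: r_def)
  finally show ?thesis ..
qed

lemma pencil_has_degenerate_member:
  fixes f g :: "complex^2^2"
  assumes "det (commutator f g) \<noteq> 0"
  shows "\<exists>t. discr (cscale t f + g) = 0"
proof -
  have "discr f \<noteq> 0 \<or> discr (f + g) - discr f - discr g \<noteq> 0"
    using assms det_commutator_discr[of f g] by auto
  then show ?thesis
    unfolding discr_pencil by (metis quadratic_has_root mult.commute)
qed

section \<open>Similarity\<close>

locale similarity =
  fixes P Q :: "complex^'n^'n"
  assumes left_inverse: "Q ** P = mat 1" and right_inverse: "P ** Q = mat 1"
begin

definition conjugate :: "complex^'n^'n \<Rightarrow> complex^'n^'n" where
  "conjugate X = Q ** X ** P"

lemma conjugate_mult: "conjugate (A ** B) = conjugate A ** conjugate B"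
proof -
  have "Q ** A ** (P ** Q) ** B ** P = Q ** A ** B ** P"
    by (simp add: right_inverse)
  then show ?thesis
    by (simp add: conjugate_def matrix_mul_assoc)
qed

lemma conjugate_add: "conjugate (A + B) = conjugate A + conjugate B"
  by (simp add: conjugate_def matrix_add_ldistrib matrix_add_rdistrib)

lemma conjugate_diff: "conjugate (A - B) = conjugate A - conjugate B"
  by (simp add: conjugate_def matrix_diff_ldistrib matrix_diff_rdistrib)

lemma conjugate_cscale: "conjugate (cscale c A) = cscale c (conjugate A)"
  by (simp add: conjugate_def)

lemma conjugate_mat: "conjugate (mat c) = mat c"
  by (simp add: conjugate_def left_inverse)

lemma conjugate_0 [simp]: "conjugate 0 = 0"
  using conjugate_mat[of 0] by simp

lemma conjugate_commutator: "conjugate (commutator f g) = commutator (conjugate f) (conjugate g)"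
  by (simp add: commutator_def conjugate_diff conjugate_mult)

lemma conjugate_inverse: "P ** conjugate X ** Q = X"
proof -
  have "P ** conjugate X ** Q = (P ** Q) ** X ** (P ** Q)"
    by (simp add: conjugate_def matrix_mul_assoc)
  then show ?thesis
    by (simp add: right_inverse)
qed

lemma conjugate_eq_iff: "conjugate A = conjugate B \<longleftrightarrow> A = B"
  by (metis conjugate_inverse)

lemma conjugate_eq_0_iff: "conjugate A = 0 \<longleftrightarrow> A = 0"
  using conjugate_eq_iff[of A 0] by simp

lemma trace_conjugate: "trace (conjugate A) = trace A"
proof -
  have "trace (Q ** A ** P) = trace (P ** Q ** A)"
    by (metis matrix_mul_assoc trace_mul_sym)
  then show ?thesis
    by (simp add: conjugate_def right_inverse)
qed

lemma det_conjugate: "det (conjugate A) = det A"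
proof -
  have "det Q * det P = 1"
    using left_inverse det_mul[of Q P] by simp
  then show ?thesis
    by (simp add: conjugate_def det_mul)
qed

end

lemma nilpotent_similar_E12:
  fixes D :: "complex^2^2"
  assumes "D \<noteq> 0" "D ** D = 0"
  shows "\<exists>P Q. similarity P Q \<and> similarity.conjugate P Q D = mat2 0 1 0 0"
proof -
  obtain a b c d where D: "D = mat2 a b c d"
    by (rule mat2_cases)
  have square: "a * a + b * c = 0" "c * a + d * c = 0"
    using assms(2) by (simp_all add: D zero_eq_mat2)
  have "\<exists>P Q. Q ** P = mat 1 \<and> P ** Q = mat 1 \<and> Q ** D ** P = mat2 0 1 0 0"
  proof (cases "c = 0")
    case False
    have "c * (a + d) = 0"
      using square(2) by (simp add: algebra_simps)
    with False have d: "d = - a"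
      by (simp add: add_eq_0_iff)
    have b: "b = - a * a / c"
      using square(1) False by (simp add: field_simps add_eq_0_iff)
    have "mat2 0 (1 / c) 1 (- a / c) ** D ** mat2 a 1 c 0 = mat2 0 1 0 0"
      using False by (simp add: D b d field_simps)
    moreover have "mat2 0 (1 / c) 1 (- a / c) ** mat2 a 1 c 0 = mat 1"
        "mat2 a 1 c 0 ** mat2 0 (1 / c) 1 (- a / c) = mat 1"
      using False by (simp_all add: mat_eq_mat2 field_simps)
    ultimately show ?thesis
      by blast
  next
    case True
    with square assms(2) have "a = 0" "d = 0"
      by (simp_all add: D zero_eq_mat2)
    with True assms(1) have "b \<noteq> 0"
      by (auto simp: D zero_eq_mat2)
    with True \<open>a = 0\<close> \<open>d = 0\<close> show ?thesis
      by (intro exI[of _ "mat2 b 0 0 1"] exI[of _ "mat2 (1 / b) 0 0 1"]) (simp add: D mat_eq_mat2)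
  qed
  then show ?thesis
    by (metis similarity_def similarity.conjugate_def)
qed

lemma upper_triangular_if_commutator_E12:
  fixes f g :: "complex^2^2"
  assumes "commutator f g = mat2 0 1 0 0"
  obtains a1 b1 d1 a2 b2 d2
  where "f = mat2 a1 b1 0 d1" "g = mat2 a2 b2 0 d2" "(a1 - d1) * b2 - (a2 - d2) * b1 = 1"
proof -
  obtain a1 b1 c1 d1 where f: "f = mat2 a1 b1 c1 d1"
    by (rule mat2_cases)
  obtain a2 b2 c2 d2 where g: "g = mat2 a2 b2 c2 d2"
    by (rule mat2_cases)
  have "commutator f g = mat2 (b1 * c2 - b2 * c1) ((a1 - d1) * b2 - (a2 - d2) * b1)
      (c1 * (a2 - d2) - c2 * (a1 - d1)) (c1 * b2 - c2 * b1)"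
    by (simp add: commutator_def f g) algebra
  with assms have entries: "b1 * c2 - b2 * c1 = 0" "(a1 - d1) * b2 - (a2 - d2) * b1 = 1"
      "c1 * (a2 - d2) - c2 * (a1 - d1) = 0"
    by simp_all
  then have "c1 = 0" "c2 = 0"
    by algebra+
  with entries f g that show ?thesis
    by blast
qed

section \<open>Exponentials of 2x2 matrices\<close>

fun pow_divdiff :: "complex \<Rightarrow> complex \<Rightarrow> nat \<Rightarrow> complex" where
  "pow_divdiff l m 0 = 0"
| "pow_divdiff l m (Suc k) = l ^ k + m * pow_divdiff l m k"

lemma pow_divdiff_mult: "(l - m) * pow_divdiff l m k = l ^ k - m ^ k"
proof (induction k)
  case (Suc k)
  have "(l - m) * pow_divdiff l m (Suc k) = (l - m) * l ^ k + m * ((l - m) * pow_divdiff l m k)"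
    by (simp add: algebra_simps)
  then show ?case
    unfolding Suc.IH by (simp add: algebra_simps)
qed simp

lemma pow_divdiff_same: "pow_divdiff l l k = of_nat k * l ^ (k - 1)"
  by (induction k) (auto simp: algebra_simps elim: pow_divdiff.elims)

definition exp_divdiff :: "complex \<Rightarrow> complex \<Rightarrow> complex" where
  "exp_divdiff l m = (if l = m then exp l else (exp l - exp m) / (l - m))"

definition exprel :: "complex \<Rightarrow> complex" where
  "exprel z = (if z = 0 then 1 else (exp z - 1) / z)"

lemma exprel_0 [simp]: "exprel 0 = 1"
  by (simp add: exprel_def)

lemma mult_exprel: "z * exprel z = exp z - 1"
  by (simp add: exprel_def)

lemma exprel_1_nonzero: "exprel 1 \<noteq> 0"
proof -
  have "exp (1::complex) \<noteq> 1"
    by (metis exp_of_real exp_eq_one_iff of_real_1 of_real_eq_1_iff zero_neq_one)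
  then show ?thesis
    by (simp add: exprel_def)
qed

lemma U_set_iff_exprel: "u \<in> U_set \<longleftrightarrow> u \<noteq> 0 \<and> exprel u = 1"
  by (auto simp: U_set_def exprel_def field_simps)

lemma exp_divdiff_mult: "(l - m) * exp_divdiff l m = exp l - exp m"
  by (simp add: exp_divdiff_def)

lemma exp_divdiff_eq_exprel: "exp_divdiff l m = exp m * exprel (l - m)"
proof (cases "l = m")
  case False
  have "exp l = exp m * exp (l - m)"
    by (simp add: exp_add[symmetric])
  with False show ?thesis
    by (simp add: exp_divdiff_def exprel_def field_simps)
qed (simp add: exp_divdiff_def)

lemma exp_divdiff_scaled_nonzero: "\<exists>t. t \<noteq> 0 \<and> exp_divdiff (t * l) (t * m) \<noteq> 0"
proof (cases "l = m")
  case True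
  then show ?thesis
    by (intro exI[of _ 1]) (simp add: exp_divdiff_def)
next
  case False
  define t where "t = 1 / (l - m)"
  have "t * l - t * m = t * (l - m)"
    by (simp add: algebra_simps)
  also have "\<dots> = 1"
    using False by (simp add: t_def)
  finally have "exp_divdiff (t * l) (t * m) = exp (t * m) * exprel 1"
    by (simp add: exp_divdiff_eq_exprel)
  with False show ?thesis
    by (intro exI[of _ t]) (simp add: t_def exprel_1_nonzero)
qed

lemma exp_divdiff_sums: "(\<lambda>k. pow_divdiff l m k / fact k) sums exp_divdiff l m"
proof (cases "l = m")
  case True
  have "pow_divdiff l l (Suc k) / fact (Suc k) = l ^ k /\<^sub>R fact k" for k
    by (simp add: pow_divdiff_same scaleR_conv_of_real divide_simps del: of_nat_Suc)
  then have "(\<lambda>k. pow_divdiff l l (Suc k) / fact (Suc k)) sums exp l"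
    using exp_converges[of l] by simp
  then show ?thesis
    using True sums_Suc_iff[of "\<lambda>k. pow_divdiff l l k / fact k"] by (simp add: exp_divdiff_def)
next
  case False
  have "pow_divdiff l m k = (l ^ k - m ^ k) / (l - m)" for k
    using pow_divdiff_mult[of l m k] False by (simp add: field_simps)
  then have "pow_divdiff l m k / fact k = (l ^ k /\<^sub>R fact k - m ^ k /\<^sub>R fact k) / (l - m)" for k
    by (simp add: scaleR_conv_of_real field_simps)
  then show ?thesis
    using False sums_divide[OF sums_diff[OF exp_converges exp_converges], of l m "l - m"]
    by (simp add: exp_divdiff_def)
qed

lemma sum_product_solvable: "\<exists>l m :: complex. s = l + m \<and> p = l * m"
proof -
  let ?r = "csqrt (s\<^sup>2 / 4 - p)"
  have "p = (s / 2 + ?r) * (s / 2 - ?r)"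
    by (simp add: algebra_simps power2_eq_square[symmetric] power_divide)
  then show ?thesis
    by (intro exI[of _ "s / 2 + ?r"] exI[of _ "s / 2 - ?r"]) simp
qed

lemma mpow_eigen:
  fixes X :: "complex^2^2"
  assumes "trace X = l + m" "det X = l * m"
  shows "mpow X k = mat (l ^ k - l * pow_divdiff l m k) + cscale (pow_divdiff l m k) X"
proof (induction k)
  case 0
  then show ?case
    by (simp add: vec_eq_iff cscale_def)
next
  case (Suc k)
  obtain a b c d where X: "X = mat2 a b c d"
    by (rule mat2_cases)
  have "a + d = l + m" "a * d - b * c = l * m"
    using assms by (simp_all add: X)
  then show ?case
    unfolding mpow.simps Suc.IH by (simp add: X mat_eq_mat2) algebra
qed

lemma sums_mat_cscale:
  fixes X :: "complex^'n^'n"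
  assumes "a sums A" "b sums B"
  shows "(\<lambda>k. mat (a k) + cscale (b k) X) sums (mat A + cscale B X)"
proof -
  have "(\<lambda>k. (mat (a k) + cscale (b k) X) $ i $ j) sums ((mat A + cscale B X) $ i $ j)" for i j
    using sums_add[OF sums_mult2[OF assms(1), of "mat 1 $ i $ j"]
        sums_mult2[OF assms(2), of "X $ i $ j"]]
    by (cases "i = j") (simp_all add: mat_def cscale_def)
  then show ?thesis
    unfolding sums_def by (intro vec_tendstoI) simp
qed

lemma scaleR_eq_cscale: "r *\<^sub>R A = cscale (of_real r) A"
  by (simp add: vec_eq_iff cscale_def) (simp add: scaleR_conv_of_real)

lemma mexp_eigen:
  fixes X :: "complex^2^2"
  assumes "trace X = l + m" "det X = l * m"
  shows "mexp X = mat (exp l - l * exp_divdiff l m) + cscale (exp_divdiff l m) X"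
proof -
  have exp_l: "(\<lambda>k. l ^ k / fact k) sums exp l"
    using exp_converges[of l] by (simp add: scaleR_conv_of_real field_simps)
  have "(1 / fact k) *\<^sub>R mpow X k
      = mat (l ^ k / fact k - l * (pow_divdiff l m k / fact k)) + cscale (pow_divdiff l m k / fact k) X"
    for k
    by (simp add: mpow_eigen[OF assms] scaleR_eq_cscale algebra_simps)
  moreover have "(\<lambda>k. mat (l ^ k / fact k - l * (pow_divdiff l m k / fact k))
      + cscale (pow_divdiff l m k / fact k) X)
    sums (mat (exp l - l * exp_divdiff l m) + cscale (exp_divdiff l m) X)"
    by (intro sums_mat_cscale sums_diff sums_mult exp_l exp_divdiff_sums)
  ultimately show ?thesis
    unfolding mexp_def by (simp add: sums_iff)
qed

lemma mexp_upper_triangular: "mexp (mat2 a b 0 d) = mat2 (exp a) (b * exp_divdiff a d) 0 (exp d)"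
  using exp_divdiff_mult[of a d]
  by (simp add: mexp_eigen[of _ a d] mat_eq_mat2 algebra_simps)

lemma mexp_pencil_upper_triangular_iff:
  "mexp (cscale t (mat2 a1 b1 0 d1) + mat2 a2 b2 0 d2)
      = mexp (cscale t (mat2 a1 b1 0 d1)) ** mexp (mat2 a2 b2 0 d2)
    \<longleftrightarrow> (t * b1 + b2) * exprel (t * (a1 - d1) + (a2 - d2))
      = exp (t * (a1 - d1)) * b2 * exprel (a2 - d2) + t * b1 * exprel (t * (a1 - d1))"
proof -
  define e where "e = exp (t * d1 + d2)"
  have scaled: "cscale t (mat2 a1 b1 0 d1) = mat2 (t * a1) (t * b1) 0 (t * d1)"
    and pencil: "mat2 (t * a1) (t * b1) 0 (t * d1) + mat2 a2 b2 0 d2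
      = mat2 (t * a1 + a2) (t * b1 + b2) 0 (t * d1 + d2)"
    by simp_all
  have gaps: "t * a1 + a2 - (t * d1 + d2) = t * (a1 - d1) + (a2 - d2)"
      "t * a1 - t * d1 = t * (a1 - d1)"
    by (simp_all add: algebra_simps)
  have lhs: "mexp (cscale t (mat2 a1 b1 0 d1) + mat2 a2 b2 0 d2)
      = mat2 (exp (t * a1 + a2)) (e * ((t * b1 + b2) * exprel (t * (a1 - d1) + (a2 - d2)))) 0 e"
    and rhs: "mexp (cscale t (mat2 a1 b1 0 d1)) ** mexp (mat2 a2 b2 0 d2)
      = mat2 (exp (t * a1) * exp a2)
          (exp (t * a1) * (b2 * (exp d2 * exprel (a2 - d2)))
            + t * b1 * (exp (t * d1) * exprel (t * (a1 - d1))) * exp d2)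
          0 (exp (t * d1) * exp d2)"
    unfolding scaled pencil mexp_upper_triangular exp_divdiff_eq_exprel gaps
    by (simp_all add: e_def)
  have "exp (t * a1) = exp (t * (a1 - d1)) * exp (t * d1)"
    by (simp add: exp_add[symmetric] algebra_simps)
  then have "exp (t * a1) * (b2 * (exp d2 * exprel (a2 - d2)))
        + t * b1 * (exp (t * d1) * exprel (t * (a1 - d1))) * exp d2
      = e * (exp (t * (a1 - d1)) * b2 * exprel (a2 - d2) + t * b1 * exprel (t * (a1 - d1)))"
    by (simp add: e_def exp_add algebra_simps)
  moreover have "exp (t * d1) * exp d2 = e" "e \<noteq> 0"
    by (simp_all add: e_def exp_add)
  ultimately show ?thesis
    unfolding lhs rhs by (simp add: exp_add)
qed

locale similarity2 = similarity P Q for P Q :: "complex^2^2"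
begin

lemma mexp_conjugate: "mexp (conjugate X) = conjugate (mexp X)"
proof -
  obtain l m where "trace X = l + m" "det X = l * m"
    using sum_product_solvable[of "trace X" "det X"] by blast
  then show ?thesis
    by (simp add: mexp_eigen trace_conjugate det_conjugate conjugate_add conjugate_mat
        conjugate_cscale)
qed

lemma mexp_pencil_conjugate_iff:
  "mexp (cscale t (conjugate f) + conjugate g) = mexp (cscale t (conjugate f)) ** mexp (conjugate g)
    \<longleftrightarrow> mexp (cscale t f + g) = mexp (cscale t f) ** mexp g"
  by (simp add: conjugate_cscale[symmetric] conjugate_add[symmetric] mexp_conjugate
      conjugate_mult[symmetric] conjugate_eq_iff)

end

section \<open>Splitting of the exponential\<close>

definition exp_splits :: "complex^'n^'n \<Rightarrow> complex^'n^'n \<Rightarrow> bool" where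
  "exp_splits f g \<longleftrightarrow> (\<forall>t. mexp (cscale t f + g) = mexp (cscale t f) ** mexp g)"

lemma (in similarity2) exp_splits_conjugate_iff:
  "exp_splits (conjugate f) (conjugate g) \<longleftrightarrow> exp_splits f g"
  by (simp add: exp_splits_def mexp_pencil_conjugate_iff)

lemma mexp_scalar_if_exp_splits:
  fixes f g :: "complex^2^2"
  assumes "det (commutator f g) \<noteq> 0" "exp_splits f g"
  shows "\<exists>c. mexp g = mat c"
proof -
  obtain lf mf where f: "trace f = lf + mf" "det f = lf * mf"
    using sum_product_solvable[of "trace f" "det f"] by blast
  obtain lg mg where g: "trace g = lg + mg" "det g = lg * mg"
    using sum_product_solvable[of "trace g" "det g"] by blast
  obtain t where t: "t \<noteq> 0" "exp_divdiff (t * lf) (t * mf) \<noteq> 0"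
    using exp_divdiff_scaled_nonzero by blast
  obtain l m where tfg: "trace (cscale t f + g) = l + m" "det (cscale t f + g) = l * m"
    using sum_product_solvable[of "trace (cscale t f + g)" "det (cscale t f + g)"] by blast
  have tf: "trace (cscale t f) = t * lf + t * mf" "det (cscale t f) = (t * lf) * (t * mf)"
    using f by (simp_all add: det_cscale2 algebra_simps power2_eq_square)
  have "trace (mexp (cscale t f + g) ** commutator f g) = 0"
    unfolding mexp_eigen[OF tfg]
    by (simp add: add.assoc trace_span_mult_commutator[unfolded add.assoc])
  moreover have "trace (mexp (cscale t f) ** mexp g ** commutator f g)
      = - (exp_divdiff (t * lf) (t * mf) * t) * exp_divdiff lg mg * det (commutator f g)"
    unfolding mexp_eigen[OF tf] mexp_eigen[OF g] by (simp add: trace_product_mult_commutator)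
  ultimately have "exp_divdiff lg mg = 0"
    using assms t by (simp add: exp_splits_def)
  then have "mexp g = mat (exp lg)"
    by (simp add: mexp_eigen[OF g])
  then show ?thesis ..
qed

lemma commutator_singular_if_exp_splits:
  fixes f g :: "complex^2^2"
  assumes "exp_splits f g"
  shows "det (commutator f g) = 0"
proof (rule ccontr)
  assume invertible: "det (commutator f g) \<noteq> 0"
  obtain c where g: "mexp g = mat c"
    using mexp_scalar_if_exp_splits[OF invertible assms] by blast
  obtain t where degenerate: "discr (cscale t f + g) = 0"
    using pencil_has_degenerate_member[OF invertible] by blast
  define l where "l = trace (cscale t f + g) / 2"
  have "l * l = (trace (cscale t f + g))\<^sup>2 / 4"
    by (simp add: l_def power2_eq_square)
  also have "\<dots> = det (cscale t f + g)"
    using degenerate by (simp add: discr_def)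
  finally have tfg: "trace (cscale t f + g) = l + l" "det (cscale t f + g) = l * l"
    by (simp_all add: l_def)
  obtain lf mf where tf: "trace (cscale t f) = lf + mf" "det (cscale t f) = lf * mf"
    using sum_product_solvable[of "trace (cscale t f)" "det (cscale t f)"] by blast
  have "commutator f (mexp (cscale t f + g)) = cscale (exp l) (commutator f g)"
    unfolding mexp_eigen[OF tfg] by (simp add: exp_divdiff_def commutator_add_right)
  moreover have "commutator f (mexp (cscale t f) ** mexp g) = 0"
    unfolding mexp_eigen[OF tf] g by (simp add: commutator_add_right)
  ultimately have "commutator f g = 0"
    using assms by (simp add: exp_splits_def cscale_eq_0_iff)
  with invertible show False
    by (simp add: zero_eq_mat2)
qed

lemma exprel_not_exp_equivariant: "\<exists>s. exprel (s + u) \<noteq> exp s * exprel u"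
proof (rule ccontr)
  assume "\<not> ?thesis"
  then have shift: "exprel (s + u) = exp s * exprel u" for s
    by blast
  have "exprel (2 * of_real pi * \<i>) = 0"
    by (simp add: exprel_def)
  moreover have "exp (2 * of_real pi * \<i> - u) = exp (- u)"
    by (simp add: exp_diff exp_minus field_simps)
  ultimately have "exp (- u) * exprel u = 0"
    using shift[of "2 * of_real pi * \<i> - u"] by simp
  moreover have "exp (- u) * exprel u = 1"
    using shift[of "- u"] by simp
  ultimately show False
    by simp
qed

lemma exprel_functional_equation:
  assumes normalized: "x * b2 - u * b1 = 1"
    and equation: "\<And>t. (t * b1 + b2) * exprel (t * x + u)
      = exp (t * x) * b2 * exprel u + t * b1 * exprel (t * x)"
  shows "x = 0 \<and> b1 \<noteq> 0 \<and> u \<in> U_set"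
proof -
  have "x = 0"
  proof (rule ccontr)
    assume "x \<noteq> 0"
    have "exprel (s + u) = exp s * exprel u" for s
    proof -
      have "(s / x * b1 + b2) * exprel (s + u) = exp s * b2 * exprel u + s / x * b1 * exprel s"
        using equation[of "s / x"] \<open>x \<noteq> 0\<close> by simp
      moreover have "(s + u) * exprel (s + u) = exp s * exp u - 1" "s * exprel s = exp s - 1"
          "u * exprel u = exp u - 1"
        by (simp_all add: mult_exprel exp_add)
      ultimately show ?thesis
        using normalized \<open>x \<noteq> 0\<close> by (simp add: field_simps) algebra
    qed
    then show False
      using exprel_not_exp_equivariant by blast
  qed
  with normalized have "- u * b1 = 1"
    by simp
  moreover have "(b1 + b2) * exprel u = b2 * exprel u + b1"
    using equation[of 1] \<open>x = 0\<close> by simp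
  ultimately show ?thesis
    using \<open>x = 0\<close> by (auto simp: U_set_iff_exprel algebra_simps)
qed

lemma exp_splits_if_normal_form:
  fixes f g :: "complex^2^2"
  assumes "f - mat \<sigma> \<noteq> 0" "(f - mat \<sigma>) ** (f - mat \<sigma>) = 0"
    and "(f - mat \<sigma>) ** (g - mat \<tau>) = 0" "trace (g - mat \<tau>) \<in> U_set"
  shows "f ** g \<noteq> g ** f \<and> exp_splits f g"
proof -
  obtain P Q where "similarity P Q"
    and nilpotent: "similarity.conjugate P Q (f - mat \<sigma>) = mat2 0 1 0 0"
    using nilpotent_similar_E12[OF assms(1,2)] by blast
  then interpret similarity2 P Q
    by (simp add: similarity2_def)
  define u where "u = trace (g - mat \<tau>)"
  obtain w1 w2 w3 w4 where w: "conjugate (g - mat \<tau>) = mat2 w1 w2 w3 w4"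
    by (rule mat2_cases)
  have "mat2 0 1 0 0 ** mat2 w1 w2 w3 w4 = 0"
    using assms(3) conjugate_mult[of "f - mat \<sigma>" "g - mat \<tau>"] nilpotent w by simp
  moreover have "w1 + w4 = u"
    using trace_conjugate[of "g - mat \<tau>"] w by (simp add: u_def)
  moreover have "conjugate g = conjugate (g - mat \<tau>) + mat \<tau>"
    using conjugate_diff[of g "mat \<tau>"] by (simp add: conjugate_mat)
  ultimately have g': "conjugate g = mat2 (\<tau> + u) w2 0 \<tau>"
    using w by (simp add: mat_eq_mat2 zero_eq_mat2)
  have "conjugate f = conjugate (f - mat \<sigma>) + mat \<sigma>"
    using conjugate_diff[of f "mat \<sigma>"] by (simp add: conjugate_mat)
  then have f': "conjugate f = mat2 \<sigma> 1 0 \<sigma>"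
    using nilpotent by (simp add: mat_eq_mat2)
  have u: "u \<noteq> 0" "exprel u = 1"
    using assms(4) by (simp_all add: u_def U_set_iff_exprel)
  have "conjugate (commutator f g) \<noteq> 0"
    using u unfolding conjugate_commutator f' g' by (simp add: commutator_def zero_eq_mat2)
  then have "f ** g \<noteq> g ** f"
    by (auto simp: commutator_def)
  moreover have "exp_splits (mat2 \<sigma> 1 0 \<sigma>) (mat2 (\<tau> + u) w2 0 \<tau>)"
    using u by (simp only: exp_splits_def mexp_pencil_upper_triangular_iff) (simp add: algebra_simps)
  ultimately show ?thesis
    using exp_splits_conjugate_iff f' g' by metis
qed

lemma normal_form_if_exp_splits:
  fixes f g :: "complex^2^2"
  assumes "f ** g \<noteq> g ** f" "exp_splits f g" "commutator f g ** commutator f g = 0"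
  shows "\<exists>\<sigma> \<tau>. f - mat \<sigma> \<noteq> 0 \<and> (f - mat \<sigma>) ** (f - mat \<sigma>) = 0
    \<and> (f - mat \<sigma>) ** (g - mat \<tau>) = 0 \<and> trace (g - mat \<tau>) \<in> U_set"
proof -
  have "commutator f g \<noteq> 0"
    using assms(1) by (simp add: commutator_def)
  then obtain P Q where "similarity P Q"
    and nilpotent: "similarity.conjugate P Q (commutator f g) = mat2 0 1 0 0"
    using nilpotent_similar_E12 assms(3) by blast
  then interpret similarity2 P Q
    by (simp add: similarity2_def)
  obtain a1 b1 d1 a2 b2 d2 where f': "conjugate f = mat2 a1 b1 0 d1"
    and g': "conjugate g = mat2 a2 b2 0 d2" and normalized: "(a1 - d1) * b2 - (a2 - d2) * b1 = 1"
    using upper_triangular_if_commutator_E12 nilpotent by (metis conjugate_commutator)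
  have "exp_splits (mat2 a1 b1 0 d1) (mat2 a2 b2 0 d2)"
    using assms(2) exp_splits_conjugate_iff f' g' by metis
  then have "a1 - d1 = 0 \<and> b1 \<noteq> 0 \<and> a2 - d2 \<in> U_set"
    by (intro exprel_functional_equation[OF normalized])
      (simp only: exp_splits_def mexp_pencil_upper_triangular_iff)
  moreover have "conjugate (f - mat a1) = mat2 0 b1 0 (d1 - a1)"
    and "conjugate (g - mat d2) = mat2 (a2 - d2) b2 0 0"
    unfolding conjugate_diff conjugate_mat f' g' by (simp_all add: mat_eq_mat2)
  ultimately have "conjugate (f - mat a1) \<noteq> 0"
      "conjugate ((f - mat a1) ** (f - mat a1)) = 0"
      "conjugate ((f - mat a1) ** (g - mat d2)) = 0"
      "trace (conjugate (g - mat d2)) \<in> U_set"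
    by (simp_all add: conjugate_mult zero_eq_mat2)
  then show ?thesis
    by (auto simp: conjugate_eq_0_iff trace_conjugate)
qed

theorem theorem2:
  fixes f g :: "complex^2^2"
  shows "((f ** g \<noteq> g ** f) \<and>
          (\<forall>t::complex. mexp (cscale t f + g) = mexp (cscale t f) ** mexp g))
     \<longleftrightarrow>
         (\<exists>\<sigma> \<tau> :: complex.
            let ft = f - cscale \<sigma> (mat 1); gt = g - cscale \<tau> (mat 1) in
              ft \<noteq> 0 \<and> ft ** ft = 0 \<and> ft ** gt = 0 \<and> trace gt \<in> U_set)"
proof -
  have "exp_splits f g \<Longrightarrow> commutator f g ** commutator f g = 0"
    using commutator_singular_if_exp_splits by (simp add: cayley_hamilton2 trace_commutator)
  then show ?thesis
    using normal_form_if_exp_splits exp_splits_if_normal_form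
    unfolding exp_splits_def[symmetric] by (auto simp: Let_def)
qed

end
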